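(* Let $L\ge2$ and let $[0,1]^2=S_0\supset S_1\supset\cdots$ be such that each $S_n$ is the union of $L^n$ squares of $\mathcal{D}_n$, one from each column; let $\mathcal{S}_n=\{Q\in\mathcal{D}_n:Q\subset S_n\}$. There is a constant $C$ depending only on $L$ such that for all $n$ and all $i,j\in\{1,\dots,n\}$, \[ \#\bigl\{(Q,Q')\in\mathcal{S}_n\times\mathcal{S}_n:\ |x(Q)-x(Q')|\le L^{-i},\ |y(Q)-y(Q')|\ge L^{-j}\bigr\}\le C\,L^{2n+j-2i}. \]
   Context: $\mathcal{D}_n$ is the set of closed squares obtained by dividing $[0,1]^2$ into an $L^n\times L^n$ grid. For $Q\in\mathcal{D}_n$, $(x(Q),y(Q))$ denotes the lower-left corner of $Q$. *)

theory Defs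
  imports Complex_Main
begin

definition grid_square :: "nat \<Rightarrow> nat \<Rightarrow> nat \<Rightarrow> nat \<Rightarrow> (real \<times> real) set" where
  "grid_square L n a b =
     {real a / real L ^ n .. (real a + 1) / real L ^ n} \<times>
     {real b / real L ^ n .. (real b + 1) / real L ^ n}"

definition gridD :: "nat \<Rightarrow> nat \<Rightarrow> (real \<times> real) set set" where
  "gridD L n = {grid_square L n a b | a b. a < L ^ n \<and> b < L ^ n}"

definition xQ :: "(real \<times> real) set \<Rightarrow> real" where
  "xQ Q = Inf (fst ` Q)"

definition yQ :: "(real \<times> real) set \<Rightarrow> real" where
  "yQ Q = Inf (snd ` Q)"

definition one_per_column :: "nat \<Rightarrow> nat \<Rightarrow> (real \<times> real) set \<Rightarrow> bool" where
  "one_per_column L n S \<longleftrightarrow>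
     (\<exists>f. (\<forall>a<L ^ n. f a < L ^ n) \<and> S = (\<Union>a<L ^ n. grid_square L n a (f a)))"

end

theory Submission
  imports Defs
begin

text \<open>
  Write \<open>S n\<close> as the union of the squares with column \<open>a\<close> and row \<open>F n a\<close>. Since the
  \<open>S n\<close> decrease, the row functions are consistent, \<open>F n a div L^(n-k) = F k (a div L^(n-k))\<close>:
  columns in the same block of \<open>L^(n-k)\<close> columns have rows in the same block of \<open>L^(n-k)\<close> rows.
  The condition on \<open>x\<close> says the columns differ by at most \<open>D = L^(n-i)\<close>, the one on \<open>y\<close> that
  the rows differ by at least \<open>L^(n-j)\<close>. If \<open>i \<le> j\<close>, counting all close column pairs gives
  \<open>L^n (2D + 1) \<le> 3 L^(2n-i)\<close>. If \<open>i > j\<close>, put \<open>M = L^(n-j-1)\<close>: rows at distance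
  \<open>L^(n-j) = L M\<close> lie in different \<open>M\<close>-blocks, hence so do the columns, and close column pairs
  straddling one of the \<open>L^(j+1)\<close> block boundaries number at most \<open>2 D\<^sup>2\<close> per boundary,
  for a total of \<open>2 L^(2n+j-2i+1)\<close>.
\<close>

lemma mem_grid_square:
  "(x, y) \<in> grid_square L n a b \<longleftrightarrow>
     x \<in> {real a / real L ^ n .. (real a + 1) / real L ^ n} \<and>
     y \<in> {real b / real L ^ n .. (real b + 1) / real L ^ n}"
  by (simp add: grid_square_def)

lemma xQ_grid_square: "0 < L \<Longrightarrow> xQ (grid_square L n a b) = real a / real L ^ n"
  by (simp add: xQ_def grid_square_def divide_right_mono)

lemma yQ_grid_square: "0 < L \<Longrightarrow> yQ (grid_square L n a b) = real b / real L ^ n"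
  by (simp add: yQ_def grid_square_def divide_right_mono)

lemma midpoint_mem_grid_square:
  "0 < L \<Longrightarrow> ((real a + 1/2) / real L ^ n, (real b + 1/2) / real L ^ n) \<in> grid_square L n a b"
  by (simp add: mem_grid_square divide_right_mono)

lemma real_power_split:
  "k \<le> n \<Longrightarrow> real L ^ n = real L ^ k * real (L ^ (n - k))"
  by (simp flip: power_add)

lemma midpoint_in_coarse_interval_div:
  assumes "0 < L" "k \<le> n"
    and "(real u + 1/2) / real L ^ n \<in> {real c / real L ^ k .. (real c + 1) / real L ^ k}"
  shows "u div L ^ (n - k) = c"
proof -
  define M where "M = L ^ (n - k)"
  have pos: "real L ^ k > 0" "real M > 0" using assms(1) by (simp_all add: M_def)
  have "real c * real M \<le> real u + 1/2" "real u + 1/2 \<le> (real c + 1) * real M"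
    using assms(3) pos unfolding real_power_split[OF assms(2)] M_def[symmetric]
    by (auto simp: divide_simps mult.assoc mult.left_commute[of _ "real L ^ k"])
  then have "real (c * M) < real u + 1" "real u < real (Suc c * M)"
    by (simp_all add: algebra_simps)
  then have "c * M \<le> u" "u < Suc c * M"
    by linarith+
  then show ?thesis
    unfolding M_def[symmetric] by (intro div_nat_eqI) (simp_all add: mult.commute)
qed

text \<open>Centres are used because neighbouring closed squares share their edges, whereas the
  centre of a square of generation \<open>n\<close> lies in a unique square of every coarser generation.\<close>

lemma midpoint_in_column_union:
  assumes "0 < L" "k \<le> n"
    and "((real a + 1/2) / real L ^ n, (real b + 1/2) / real L ^ n)
           \<in> (\<Union>c<L ^ k. grid_square L k c (f c))"
  shows "f (a div L ^ (n - k)) = b div L ^ (n - k)"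
proof -
  obtain c where
    "((real a + 1/2) / real L ^ n, (real b + 1/2) / real L ^ n) \<in> grid_square L k c (f c)"
    using assms(3) by blast
  then have "a div L ^ (n - k) = c" "b div L ^ (n - k) = f c"
    using midpoint_in_coarse_interval_div[OF assms(1,2)] by (auto simp: mem_grid_square)
  then show ?thesis
    by simp
qed

lemma grid_squares_in_column_union:
  assumes "0 < L" "\<forall>a<L ^ n. f a < L ^ n"
  shows "{Q \<in> gridD L n. Q \<subseteq> (\<Union>a<L ^ n. grid_square L n a (f a))}
           = (\<lambda>a. grid_square L n a (f a)) ` {..<L ^ n}"
proof (intro equalityI subsetI)
  fix Q assume "Q \<in> {Q \<in> gridD L n. Q \<subseteq> (\<Union>a<L ^ n. grid_square L n a (f a))}"
  then obtain a b where "a < L ^ n" "Q = grid_square L n a b"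
    and "Q \<subseteq> (\<Union>a<L ^ n. grid_square L n a (f a))"
    by (auto simp: gridD_def)
  moreover from this have "f a = b"
    using midpoint_in_column_union[OF assms(1) order_refl]
      midpoint_mem_grid_square[OF assms(1), of a n b] by fastforce
  ultimately show "Q \<in> (\<lambda>a. grid_square L n a (f a)) ` {..<L ^ n}"
    by blast
qed (use assms(2) in \<open>auto simp: gridD_def\<close>)

lemma column_heights_div_of_subset:
  assumes "0 < L" "k \<le> n" "a < L ^ n"
    and "(\<Union>a<L ^ n. grid_square L n a (g a)) \<subseteq> (\<Union>c<L ^ k. grid_square L k c (f c))"
  shows "g a div L ^ (n - k) = f (a div L ^ (n - k))"
  using midpoint_in_column_union[OF assms(1,2)] assms(3,4)
    midpoint_mem_grid_square[OF assms(1), of a n "g a"] by fastforce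

lemma column_heights_respect_blocks:
  assumes "0 < L" "\<forall>n. S (Suc n) \<subseteq> S n"
    and "\<And>n. S n = (\<Union>a<L ^ n. grid_square L n a (F n a))"
    and "k \<le> n" "a < L ^ n" "a' < L ^ n" "a div L ^ (n - k) = a' div L ^ (n - k)"
  shows "F n a div L ^ (n - k) = F n a' div L ^ (n - k)"
proof -
  have "S n \<subseteq> S k"
    using lift_Suc_antimono_le[of S k n] assms(2,4) by blast
  then have columns_nested:
    "(\<Union>a<L ^ n. grid_square L n a (F n a)) \<subseteq> (\<Union>c<L ^ k. grid_square L k c (F k c))"
    using assms(3)[of n] assms(3)[of k] by simp
  show ?thesis
    using column_heights_div_of_subset[OF assms(1,4,5) columns_nested]
      column_heights_div_of_subset[OF assms(1,4,6) columns_nested] assms(7) by simp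
qed

lemma abs_diff_grid_le_iff:
  assumes "0 < L" "i \<le> n"
  shows "\<bar>real a / real L ^ n - real a' / real L ^ n\<bar> \<le> 1 / real L ^ i
           \<longleftrightarrow> a \<le> a' + L ^ (n - i) \<and> a' \<le> a + L ^ (n - i)"
proof -
  have "\<bar>real a / real L ^ n - real a' / real L ^ n\<bar> \<le> 1 / real L ^ i
          \<longleftrightarrow> \<bar>real a - real a'\<bar> \<le> real (L ^ (n - i))"
    using assms by (simp add: real_power_split[OF assms(2)] divide_simps abs_divide
        flip: diff_divide_distrib)
  then show ?thesis by linarith
qed

lemma abs_diff_grid_ge_iff:
  assumes "0 < L" "j \<le> n"
  shows "1 / real L ^ j \<le> \<bar>real b / real L ^ n - real b' / real L ^ n\<bar>
           \<longleftrightarrow> b + L ^ (n - j) \<le> b' \<or> b' + L ^ (n - j) \<le> b"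
proof -
  have "1 / real L ^ j \<le> \<bar>real b / real L ^ n - real b' / real L ^ n\<bar>
          \<longleftrightarrow> real (L ^ (n - j)) \<le> \<bar>real b - real b'\<bar>"
    using assms by (simp add: real_power_split[OF assms(2)] divide_simps abs_divide
        flip: diff_divide_distrib)
  then show ?thesis by linarith
qed

lemma card_pairs_image_le:
  assumes "finite A"
  shows "card {(x, y). x \<in> g ` A \<and> y \<in> g ` A \<and> R x y}
           \<le> card {(a, b). a \<in> A \<and> b \<in> A \<and> R (g a) (g b)}"
proof -
  have "{(x, y). x \<in> g ` A \<and> y \<in> g ` A \<and> R x y}
          = map_prod g g ` {(a, b). a \<in> A \<and> b \<in> A \<and> R (g a) (g b)}"
    by fastforce
  moreover have "finite {(a, b). a \<in> A \<and> b \<in> A \<and> R (g a) (g b)}"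
    by (rule finite_subset[of _ "A \<times> A"]) (use assms in auto)
  ultimately show ?thesis
    by (simp add: card_image_le)
qed

lemma card_near_pairs_le:
  "card {(a, a'). a < N \<and> a' < N \<and> a \<le> a' + D \<and> a' \<le> a + D} \<le> N * (2 * D + 1)"
  (is "card ?P \<le> _")
proof -
  have "?P \<subseteq> (\<Union>a<N. {a} \<times> {a - D .. a + D})"
    by auto
  then have "card ?P \<le> card (\<Union>a<N. {a} \<times> {a - D .. a + D})"
    by (intro card_mono) auto
  also have "\<dots> \<le> (\<Sum>a<N. card ({a} \<times> {a - D .. a + D}))"
    by (rule card_UN_le) simp
  also have "\<dots> \<le> (\<Sum>a<N. 2 * D + 1)"
    by (intro sum_mono) simp
  finally show ?thesis by simp
qed

lemma less_add_if_div_eq: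
  fixes x y M :: nat
  assumes "0 < M" "x div M = y div M"
  shows "x < y + M"
proof -
  have "x < M + y div M * M"
    using dividend_less_div_times[OF assms(1), of x] assms(2) by simp
  then show ?thesis
    using div_times_less_eq_dividend[of y M] by linarith
qed

lemma card_pairs_crossing_blocks_le:
  assumes "0 < M"
  shows "card {(a, a'). a < K * M \<and> a' < K * M \<and> a div M < a' div M \<and> a' \<le> a + D}
           \<le> K * (D * D)"
    (is "card ?C \<le> _")
proof -
  let ?U = "\<Union>m<K. {m * M - D ..< m * M} \<times> {m * M ..< m * M + D}"
  have "?C \<subseteq> ?U"
  proof clarify
    fix a a' assume pair: "a < K * M" "a' < K * M" "a div M < a' div M" "a' \<le> a + D"
    define m where "m = a' div M"
    have "a < m * M" "m * M \<le> a'" "m < K"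
      using pair assms by (simp_all add: m_def div_less_iff_less_mult)
    with pair(4) show "(a, a') \<in> ?U"
      by (intro UN_I[of m]) auto
  qed
  then have "card ?C \<le> card ?U"
    by (intro card_mono) auto
  also have "\<dots> \<le> (\<Sum>m<K. card ({m * M - D ..< m * M} \<times> {m * M ..< m * M + D}))"
    by (rule card_UN_le) simp
  also have "\<dots> \<le> (\<Sum>m<K. D * D)"
    by (intro sum_mono) (auto simp: card_cartesian_product intro: mult_le_mono1)
  finally show ?thesis by simp
qed

lemma card_near_pairs_far_values_le:
  assumes "0 < M" "M \<le> E"
    and blocks: "\<And>a a'. a < K * M \<Longrightarrow> a' < K * M \<Longrightarrow> a div M = a' div M \<Longrightarrow>
                   f a div M = f a' div M"
  shows "card {(a, a'). a < K * M \<and> a' < K * M \<and> a \<le> a' + D \<and> a' \<le> a + D \<and>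
                        (f a + E \<le> f a' \<or> f a' + E \<le> f a)}
           \<le> K * (2 * D * D)"
    (is "card ?P \<le> _")
proof -
  let ?C = "{(a, a'). a < K * M \<and> a' < K * M \<and> a div M < a' div M \<and> a' \<le> a + D}"
  have "?P \<subseteq> ?C \<union> prod.swap ` ?C"
  proof
    fix z assume "z \<in> ?P"
    then obtain a a' where z: "z = (a, a')"
      and a: "a < K * M" "a' < K * M" "a \<le> a' + D" "a' \<le> a + D"
      and far: "f a + E \<le> f a' \<or> f a' + E \<le> f a"
      by blast
    have "a div M \<noteq> a' div M"
    proof
      assume "a div M = a' div M"
      then have "f a div M = f a' div M"
        using blocks a(1,2) by blast
      then have "f a < f a' + M" "f a' < f a + M"
        using less_add_if_div_eq[OF assms(1)] by metis+
      with far assms(2) show False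
        by linarith
    qed
    with a show "z \<in> ?C \<union> prod.swap ` ?C"
      unfolding z by (cases "a div M < a' div M") (auto simp: image_iff)
  qed
  moreover have "finite ?C"
    by (rule finite_subset[of _ "{..<K * M} \<times> {..<K * M}"]) auto
  ultimately have "card ?P \<le> card (?C \<union> prod.swap ` ?C)"
    by (intro card_mono) auto
  also have "\<dots> \<le> card ?C + card (prod.swap ` ?C)"
    by (rule card_Un_le)
  also have "\<dots> \<le> 2 * card ?C"
    using card_image_le[OF \<open>finite ?C\<close>, of prod.swap] by simp
  also have "\<dots> \<le> K * (2 * D * D)"
    using card_pairs_crossing_blocks_le[OF assms(1), of K D] by simp
  finally show ?thesis .
qed

lemma card_near_columns_far_heights_le:
  assumes "0 < L" "i \<le> n" "j \<le> n"
    and nested: "\<And>k a a'. k \<le> n \<Longrightarrow> a < L ^ n \<Longrightarrow> a' < L ^ n \<Longrightarrow>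
                   a div L ^ (n - k) = a' div L ^ (n - k) \<Longrightarrow> f a div L ^ (n - k) = f a' div L ^ (n - k)"
  shows "card {(a, a'). a < L ^ n \<and> a' < L ^ n \<and> a \<le> a' + L ^ (n - i) \<and> a' \<le> a + L ^ (n - i) \<and>
                        (f a + L ^ (n - j) \<le> f a' \<or> f a' + L ^ (n - j) \<le> f a)}
           \<le> 3 * L * L ^ (2 * n + j - 2 * i)"
    (is "card ?P \<le> _")
proof (cases "i \<le> j")
  case True
  have "card ?P \<le> card {(a, a'). a < L ^ n \<and> a' < L ^ n \<and> a \<le> a' + L ^ (n - i) \<and> a' \<le> a + L ^ (n - i)}"
    by (intro card_mono) (auto intro: finite_subset[of _ "{..<L ^ n} \<times> {..<L ^ n}"])
  also have "\<dots> \<le> L ^ n * (2 * L ^ (n - i) + 1)"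
    by (rule card_near_pairs_le)
  also have "\<dots> \<le> 3 * L ^ (n + (n - i))"
    using assms(1) by (simp add: power_add)
  also have "\<dots> \<le> 3 * L ^ (2 * n + j - 2 * i)"
    using assms True by (intro mult_le_mono2 power_increasing) auto
  also have "\<dots> \<le> 3 * L * L ^ (2 * n + j - 2 * i)"
    using assms(1) by (simp add: mult.assoc)
  finally show ?thesis .
next
  case False
  then have "Suc j \<le> n"
    using assms(2) by simp
  define M where "M = L ^ (n - Suc j)"
  have M_pos: "0 < M"
    using assms(1) by (simp add: M_def)
  have power_n: "L ^ n = L ^ Suc j * M"
    using \<open>Suc j \<le> n\<close> unfolding M_def by (metis le_add_diff_inverse power_add)
  have M_le: "M \<le> L ^ (n - j)"
    using assms(1) unfolding M_def by (intro power_increasing) auto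
  have blocks: "f a div M = f a' div M"
    if "a < L ^ Suc j * M" "a' < L ^ Suc j * M" "a div M = a' div M" for a a'
    using nested[OF \<open>Suc j \<le> n\<close>] that unfolding M_def power_n[unfolded M_def] by blast
  have "card ?P \<le> L ^ Suc j * (2 * L ^ (n - i) * L ^ (n - i))"
    unfolding power_n by (rule card_near_pairs_far_values_le[OF M_pos M_le blocks])
  also have "\<dots> = 2 * L ^ (Suc j + (n - i) + (n - i))"
    by (simp add: power_add)
  also have "Suc j + (n - i) + (n - i) = Suc (2 * n + j - 2 * i)"
    using assms(2) by simp
  also have "2 * L ^ Suc (2 * n + j - 2 * i) \<le> 3 * L * L ^ (2 * n + j - 2 * i)"
    by simp
  finally show ?thesis .
qed

lemma card_square_pairs_le_card_column_pairs:
  assumes "0 < L" "i \<le> n" "j \<le> n" "\<forall>a<L ^ n. f a < L ^ n"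
  shows "card {(Q, Q'). Q \<in> {Q \<in> gridD L n. Q \<subseteq> (\<Union>a<L ^ n. grid_square L n a (f a))} \<and>
                        Q' \<in> {Q \<in> gridD L n. Q \<subseteq> (\<Union>a<L ^ n. grid_square L n a (f a))} \<and>
                        \<bar>xQ Q - xQ Q'\<bar> \<le> 1 / real L ^ i \<and> \<bar>yQ Q - yQ Q'\<bar> \<ge> 1 / real L ^ j}
           \<le> card {(a, a'). a < L ^ n \<and> a' < L ^ n \<and> a \<le> a' + L ^ (n - i) \<and> a' \<le> a + L ^ (n - i) \<and>
                        (f a + L ^ (n - j) \<le> f a' \<or> f a' + L ^ (n - j) \<le> f a)}"
proof -
  let ?square = "\<lambda>a. grid_square L n a (f a)"
  have "card {(Q, Q'). Q \<in> ?square ` {..<L ^ n} \<and> Q' \<in> ?square ` {..<L ^ n} \<and>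
                       \<bar>xQ Q - xQ Q'\<bar> \<le> 1 / real L ^ i \<and> \<bar>yQ Q - yQ Q'\<bar> \<ge> 1 / real L ^ j}
          \<le> card {(a, a'). a \<in> {..<L ^ n} \<and> a' \<in> {..<L ^ n} \<and>
                       \<bar>xQ (?square a) - xQ (?square a')\<bar> \<le> 1 / real L ^ i \<and>
                       \<bar>yQ (?square a) - yQ (?square a')\<bar> \<ge> 1 / real L ^ j}"
    by (rule card_pairs_image_le) simp
  then show ?thesis
    by (simp only: grid_squares_in_column_union[OF assms(1,4)] lessThan_iff
        xQ_grid_square[OF assms(1)] yQ_grid_square[OF assms(1)]
        abs_diff_grid_le_iff[OF assms(1,2)] abs_diff_grid_ge_iff[OF assms(1,3)] conj_assoc)
qed

lemma card_close_far_square_pairs_le: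
  assumes "0 < L" "i \<le> n" "j \<le> n"
    and "\<forall>n. S (Suc n) \<subseteq> S n" "\<forall>n. one_per_column L n (S n)"
  shows "card {(Q, Q'). Q \<in> {Q \<in> gridD L n. Q \<subseteq> S n} \<and> Q' \<in> {Q \<in> gridD L n. Q \<subseteq> S n} \<and>
                        \<bar>xQ Q - xQ Q'\<bar> \<le> 1 / real L ^ i \<and> \<bar>yQ Q - yQ Q'\<bar> \<ge> 1 / real L ^ j}
           \<le> 3 * L * L ^ (2 * n + j - 2 * i)"
proof -
  obtain F where F: "\<And>n. \<forall>a<L ^ n. F n a < L ^ n"
    and S: "\<And>n. S n = (\<Union>a<L ^ n. grid_square L n a (F n a))"
    using assms(5) unfolding one_per_column_def by metis
  show ?thesis
    unfolding S[of n]
    using card_square_pairs_le_card_column_pairs[OF assms(1-3) F]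
      card_near_columns_far_heights_le[OF assms(1-3)
        column_heights_respect_blocks[OF assms(1,4) S]]
    by (rule le_trans)
qed

theorem lemmaA2:
  fixes L :: nat
  assumes "L \<ge> 2"
  shows "\<exists>C::real. \<forall>S :: nat \<Rightarrow> (real \<times> real) set.
    S 0 = {0..1} \<times> {0..1} \<and> (\<forall>n. S (Suc n) \<subseteq> S n) \<and> (\<forall>n. one_per_column L n (S n)) \<longrightarrow>
    (\<forall>n i j. 1 \<le> i \<and> i \<le> n \<and> 1 \<le> j \<and> j \<le> n \<longrightarrow>
      real (card {(Q, Q'). Q \<in> {Q \<in> gridD L n. Q \<subseteq> S n} \<and> Q' \<in> {Q \<in> gridD L n. Q \<subseteq> S n} \<and>
                  \<bar>xQ Q - xQ Q'\<bar> \<le> 1 / real L ^ i \<and> \<bar>yQ Q - yQ Q'\<bar> \<ge> 1 / real L ^ j})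
      \<le> C * real L powi (2 * int n + int j - 2 * int i))"
proof (intro exI[of _ "real (3 * L)"] allI impI)
  fix S :: "nat \<Rightarrow> (real \<times> real) set" and n i j :: nat
  assume "S 0 = {0..1} \<times> {0..1} \<and> (\<forall>n. S (Suc n) \<subseteq> S n) \<and> (\<forall>n. one_per_column L n (S n))"
    and "1 \<le> i \<and> i \<le> n \<and> 1 \<le> j \<and> j \<le> n"
  then have "card {(Q, Q'). Q \<in> {Q \<in> gridD L n. Q \<subseteq> S n} \<and> Q' \<in> {Q \<in> gridD L n. Q \<subseteq> S n} \<and>
                    \<bar>xQ Q - xQ Q'\<bar> \<le> 1 / real L ^ i \<and> \<bar>yQ Q - yQ Q'\<bar> \<ge> 1 / real L ^ j}
               \<le> 3 * L * L ^ (2 * n + j - 2 * i)"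
    using assms by (intro card_close_far_square_pairs_le) auto
  moreover have "2 * int n + int j - 2 * int i = int (2 * n + j - 2 * i)"
    using \<open>1 \<le> i \<and> i \<le> n \<and> 1 \<le> j \<and> j \<le> n\<close> by simp
  ultimately show "real (card {(Q, Q'). Q \<in> {Q \<in> gridD L n. Q \<subseteq> S n} \<and> Q' \<in> {Q \<in> gridD L n. Q \<subseteq> S n} \<and>
                    \<bar>xQ Q - xQ Q'\<bar> \<le> 1 / real L ^ i \<and> \<bar>yQ Q - yQ Q'\<bar> \<ge> 1 / real L ^ j})
               \<le> real (3 * L) * real L powi (2 * int n + int j - 2 * int i)"
    by (simp only: power_int_of_nat of_nat_le_iff flip: of_nat_power of_nat_mult)
qed

end
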